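(* Let $Y=g(X+\delta)+\epsilon$, where $X,\delta,\epsilon$ are independent random variables, $X$ has a density with respect to Lebesgue measure, $\delta$ has a density with respect to a $\sigma$-finite Borel measure $\mu$, and $\epsilon$ has a density with respect to Lebesgue measure. Let $p\in(0,1)$ and $y_0$ with $\mathbb{P}(Y\le y_0)=p$. If $g$ is non-decreasing, then an optimal predictor of $\mathbb{I}(Y>y_0)$ can be written in the form $\mathbb{I}(X>x_0)$ for some constant $x_0$ that calibrates the predictor.
   Context: A predictor of $\mathbb{I}(Y>y_0)$ is an indicator $\mathbb{I}(h(X)>\tau)$ with $h$ Borel; it is calibrated at level $q$ if $\mathbb{P}(h(X)>\tau)=1-q$, and optimal (at level $q$) if its precision $\mathbb{P}(Y>y_0\mid h(X)>\tau)$ is at least that of every other predictor calibrated at level $q$. *)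

theory Defs
  imports "HOL-Probability.Probability"
begin

text \<open>A predictor of I(Y > y0) is an indicator I(h(X) > tau), h Borel. It is represented
  by the pair (h, tau).\<close>

definition calibrated ::
  "'a measure \<Rightarrow> ('a \<Rightarrow> real) \<Rightarrow> (real \<Rightarrow> real) \<Rightarrow> real \<Rightarrow> real \<Rightarrow> bool" where
  "calibrated M X h \<tau> q \<longleftrightarrow>
     h \<in> borel_measurable borel \<and> \<P>(\<omega> in M. h (X \<omega>) > \<tau>) = 1 - q"

definition precision ::
  "'a measure \<Rightarrow> ('a \<Rightarrow> real) \<Rightarrow> ('a \<Rightarrow> real) \<Rightarrow> real \<Rightarrow> (real \<Rightarrow> real) \<Rightarrow> real \<Rightarrow> real" where
  "precision M X Y y0 h \<tau> = \<P>(\<omega> in M. Y \<omega> > y0 \<bar> h (X \<omega>) > \<tau>)"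

definition optimal ::
  "'a measure \<Rightarrow> ('a \<Rightarrow> real) \<Rightarrow> ('a \<Rightarrow> real) \<Rightarrow> real \<Rightarrow> real \<Rightarrow> (real \<Rightarrow> real) \<Rightarrow> real \<Rightarrow> bool" where
  "optimal M X Y y0 q h \<tau> \<longleftrightarrow>
     calibrated M X h \<tau> q \<and>
     (\<forall>h' \<tau>'. calibrated M X h' \<tau>' q \<longrightarrow> precision M X Y y0 h' \<tau>' \<le> precision M X Y y0 h \<tau>)"

end

theory Submission
  imports Defs
begin

text \<open>Choose \<open>x0\<close> with \<open>P(X > x0) = 1 - p\<close>; it exists because the distribution function of \<open>X\<close> is
  continuous. Put \<open>W = g(x0 + \<delta>) + \<epsilon>\<close>, which is independent of \<open>X\<close>. By monotonicity of \<open>g\<close>,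
  \<open>Y > y0\<close> forces \<open>W > y0\<close> where \<open>X \<le> x0\<close>, and \<open>W > y0\<close> forces \<open>Y > y0\<close> where \<open>X > x0\<close>. Any
  other calibrated event \<open>{h(X) > \<tau>}\<close> trades a part of \<open>{X > x0}\<close> for a part of \<open>{X \<le> x0}\<close> of
  the same probability, and by independence this exchange cannot increase \<open>P(Y > y0, \<cdot>)\<close>.\<close>

lemma distributed_lborel_no_atoms:
  fixes X :: "'a \<Rightarrow> real"
  assumes "distributed M lborel X f"
  shows "measure (distr M borel X) {x} = 0"
proof -
  have X: "X \<in> borel_measurable M"
    using assms by (simp add: distributed_def)
  have "measure (distr M borel X) {x} = measure (distr M lborel X) {x}"
    using X by (simp add: measure_distr)
  also have "\<dots> = measure (density lborel f) {x}"
    using assms by (simp add: distributed_def)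
  also have "\<dots> = 0"
    using assms by (simp add: measure_def emeasure_density distributed_def nn_integral_null_set)
  finally show ?thesis .
qed

lemma (in real_distribution) cdf_attains_value:
  assumes no_atoms: "\<And>x. measure M {x} = 0" and q: "0 < q" "q < 1"
  shows "\<exists>x. cdf M x = q"
proof -
  obtain a where a: "cdf M a < q"
    using order_tendstoD(2)[OF cdf_lim_at_bot q(1)] by (auto simp: eventually_at_bot_linorder)
  obtain b where b: "q < cdf M b" "a \<le> b"
    using order_tendstoD(1)[OF cdf_lim_at_top_prob q(2)]
    by (auto simp: eventually_at_top_linorder intro: max.cobounded1 max.cobounded2)
  have "continuous_on {a..b} (cdf M)"
    using no_atoms by (intro continuous_at_imp_continuous_on) (simp add: isCont_cdf)
  then show ?thesis
    using IVT'[of "cdf M" a q b] a b by auto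
qed

lemma (in prob_space) exists_upper_tail_prob:
  fixes X :: "'a \<Rightarrow> real"
  assumes "distributed M lborel X f" and "0 < q" "q < 1"
  shows "\<exists>x0. prob {\<omega>\<in>space M. x0 < X \<omega>} = 1 - q"
proof -
  have X[measurable]: "X \<in> borel_measurable M"
    using assms(1) by (simp add: distributed_def)
  interpret D: real_distribution "distr M borel X"
    by (rule real_distribution_distr) simp
  obtain x0 where "cdf (distr M borel X) x0 = q"
    using D.cdf_attains_value distributed_lborel_no_atoms[OF assms(1)] assms(2,3) by blast
  then have "prob {\<omega>\<in>space M. X \<omega> \<le> x0} = q"
    by (simp add: cdf_def measure_distr vimage_def Int_def conj_commute)
  then have "prob (space M - {\<omega>\<in>space M. X \<omega> \<le> x0}) = 1 - q"
    by (subst prob_compl) auto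
  moreover have "space M - {\<omega>\<in>space M. X \<omega> \<le> x0} = {\<omega>\<in>space M. x0 < X \<omega>}"
    by auto
  ultimately show ?thesis by auto
qed

lemma (in prob_space) indep_var_first_function_of_rest:
  assumes indep: "indep_vars (\<lambda>_. borel) F {0, 1, 2::nat}"
    and k: "(\<lambda>(a, b). k a b) \<in> borel_measurable (borel \<Otimes>\<^sub>M borel)"
  shows "indep_var borel (F 0) borel (\<lambda>\<omega>. k (F 1 \<omega>) (F 2 \<omega>))"
proof -
  have pair: "(\<lambda>f. (f 1, f 2)) \<in> PiM {1, 2::nat} (\<lambda>_. borel) \<rightarrow>\<^sub>M borel \<Otimes>\<^sub>M borel"
    by measurable
  have k_rest: "(\<lambda>f. k (f 1) (f 2)) \<in> borel_measurable (PiM {1, 2::nat} (\<lambda>_. borel))"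
    using measurable_compose[OF pair k] by simp
  have "indep_var (PiM {0} (\<lambda>_. borel)) (\<lambda>\<omega>. restrict (\<lambda>i. F i \<omega>) {0})
      (PiM {1, 2} (\<lambda>_. borel)) (\<lambda>\<omega>. restrict (\<lambda>i. F i \<omega>) {1, 2})"
    by (rule indep_var_restrict[OF indep]) auto
  then have "indep_var borel ((\<lambda>f. f 0) \<circ> (\<lambda>\<omega>. restrict (\<lambda>i. F i \<omega>) {0}))
      borel ((\<lambda>f. k (f 1) (f 2)) \<circ> (\<lambda>\<omega>. restrict (\<lambda>i. F i \<omega>) {1, 2}))"
    by (rule indep_var_compose[OF _ _ k_rest]) auto
  then show ?thesis by (simp add: comp_def)
qed

lemma (in prob_space) indep_var_prob_Int:
  assumes "indep_var borel X borel W" "S \<in> sets borel" "V \<in> sets borel"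
  shows "prob ((X -` S \<inter> space M) \<inter> (W -` V \<inter> space M)) =
    prob (X -` S \<inter> space M) * prob (W -` V \<inter> space M)"
proof -
  have "(\<lambda>\<omega>. (X \<omega>, W \<omega>)) -` (S \<times> V) \<inter> space M = (X -` S \<inter> space M) \<inter> (W -` V \<inter> space M)"
    by auto
  then show ?thesis
    using indep_varD[OF assms] by simp
qed

lemma (in prob_space) threshold_event_maximizes_joint_prob:
  assumes indep: "indep_var borel X borel W"
    and S: "S \<in> sets borel" and T: "T \<in> sets borel" and V: "V \<in> sets borel"
    and E: "E \<in> events"
    and same_prob: "prob (X -` S \<inter> space M) = prob (X -` T \<inter> space M)"
    and below: "\<And>\<omega>. \<omega> \<in> E \<Longrightarrow> X \<omega> \<notin> T \<Longrightarrow> W \<omega> \<in> V"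
    and above: "\<And>\<omega>. \<omega> \<in> space M \<Longrightarrow> X \<omega> \<in> T \<Longrightarrow> W \<omega> \<in> V \<Longrightarrow> \<omega> \<in> E"
  shows "prob (E \<inter> (X -` S \<inter> space M)) \<le> prob (E \<inter> (X -` T \<inter> space M))"
proof -
  have X[measurable]: "X \<in> borel_measurable M" and W[measurable]: "W \<in> borel_measurable M"
    using indep_var_rv1[OF indep] indep_var_rv2[OF indep] by auto
  let ?X = "\<lambda>A. X -` A \<inter> space M"
  let ?W = "W -` V \<inter> space M"
  have ev: "?X A \<in> events" if "A \<in> sets borel" for A
    using that by measurable
  have split: "prob (E \<inter> ?X A) = prob (E \<inter> ?X (A \<inter> B)) + prob (E \<inter> ?X (A - B))"
    if "A \<in> sets borel" "B \<in> sets borel" for A B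
  proof -
    have "E \<inter> ?X (A - B) = E \<inter> ?X A - E \<inter> ?X B" and "E \<inter> ?X (A \<inter> B) = E \<inter> ?X A \<inter> (E \<inter> ?X B)"
      by auto
    then show ?thesis
      using finite_measure_Diff'[of "E \<inter> ?X A" "E \<inter> ?X B"] ev that E by auto
  qed
  have "prob (E \<inter> ?X (S - T)) \<le> prob (?X (S - T) \<inter> ?W)"
    using below S T V E ev by (intro finite_measure_mono) (auto dest: sets.sets_into_space)
  also have "\<dots> = prob (?X (S - T)) * prob ?W"
    using indep_var_prob_Int[OF indep _ V] S T by simp
  also have "prob (?X (S - T)) = prob (?X (T - S))"
  proof -
    have "prob (?X (S - T)) = prob (?X S) - prob (?X S \<inter> ?X T)"
      using finite_measure_Diff'[of "?X S" "?X T"] ev S T by (simp add: vimage_Diff Diff_Int_distrib2)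
    moreover have "prob (?X (T - S)) = prob (?X T) - prob (?X T \<inter> ?X S)"
      using finite_measure_Diff'[of "?X T" "?X S"] ev S T by (simp add: vimage_Diff Diff_Int_distrib2)
    ultimately show ?thesis
      using same_prob by (simp add: Int_commute)
  qed
  also have "prob (?X (T - S)) * prob ?W = prob (?X (T - S) \<inter> ?W)"
    using indep_var_prob_Int[OF indep _ V] S T by simp
  also have "\<dots> \<le> prob (E \<inter> ?X (T - S))"
    using above S T V E by (intro finite_measure_mono) auto
  finally have "prob (E \<inter> ?X (S - T)) \<le> prob (E \<inter> ?X (T - S))" .
  moreover have "?X (S \<inter> T) = ?X (T \<inter> S)"
    by auto
  ultimately show ?thesis
    using split[OF S T] split[OF T S] by simp
qed

lemma (in prob_space) threshold_predictor_optimal: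
  fixes X Y W :: "'a \<Rightarrow> real"
  assumes indep: "indep_var borel X borel W" and [measurable]: "Y \<in> borel_measurable M"
    and calibrated: "calibrated M X (\<lambda>x. x) x0 q"
    and below: "\<And>\<omega>. \<omega> \<in> space M \<Longrightarrow> X \<omega> \<le> x0 \<Longrightarrow> y0 < Y \<omega> \<Longrightarrow> y0 < W \<omega>"
    and above: "\<And>\<omega>. \<omega> \<in> space M \<Longrightarrow> x0 < X \<omega> \<Longrightarrow> y0 < W \<omega> \<Longrightarrow> y0 < Y \<omega>"
  shows "optimal M X Y y0 q (\<lambda>x. x) x0"
proof -
  have [measurable]: "X \<in> borel_measurable M"
    using indep_var_rv1[OF indep] by simp
  let ?E = "{\<omega>\<in>space M. y0 < Y \<omega>}"
  have "precision M X Y y0 h \<tau> \<le> precision M X Y y0 (\<lambda>x. x) x0"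
    if "calibrated M X h \<tau> q" for h \<tau>
  proof -
    have [measurable]: "h \<in> borel_measurable borel"
      and same_prob: "prob {\<omega>\<in>space M. \<tau> < h (X \<omega>)} = prob {\<omega>\<in>space M. x0 < X \<omega>}"
      using that calibrated by (auto simp: calibrated_def)
    have "prob (?E \<inter> (X -` {x. \<tau> < h x} \<inter> space M)) \<le> prob (?E \<inter> (X -` {x0<..} \<inter> space M))"
    proof (rule threshold_event_maximizes_joint_prob[OF indep, where V = "{y0<..}"])
      show "prob (X -` {x. \<tau> < h x} \<inter> space M) = prob (X -` {x0<..} \<inter> space M)"
        using same_prob by (simp add: vimage_def Int_def conj_commute)
    qed (use below above in \<open>auto simp: not_less\<close>)
    moreover have "?E \<inter> (X -` {x. \<tau> < h x} \<inter> space M) = {\<omega>\<in>space M. y0 < Y \<omega> \<and> \<tau> < h (X \<omega>)}"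
      and "?E \<inter> (X -` {x0<..} \<inter> space M) = {\<omega>\<in>space M. y0 < Y \<omega> \<and> x0 < X \<omega>}"
      by auto
    ultimately show ?thesis
      using same_prob unfolding precision_def cond_prob_def by (simp add: divide_right_mono)
  qed
  then show ?thesis
    using calibrated by (simp add: optimal_def)
qed

theorem proposition4:
  fixes M :: "'a measure" and X \<delta> \<epsilon> :: "'a \<Rightarrow> real" and g :: "real \<Rightarrow> real"
    and \<mu> :: "real measure" and p y0 :: real
  assumes "prob_space M"
    and rv: "\<And>Z. Z \<in> {X, \<delta>, \<epsilon>} \<Longrightarrow> Z \<in> borel_measurable M"
    and indep: "prob_space.indep_vars M (\<lambda>_. borel)
                  (\<lambda>i::nat. if i = 0 then X else if i = 1 then \<delta> else \<epsilon>) {0, 1, 2}"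
    and densX: "\<exists>f. distributed M lborel X f"
    and mu: "sigma_finite_measure \<mu>" "sets \<mu> = sets borel"
    and densD: "\<exists>f. distributed M \<mu> \<delta> f"
    and densE: "\<exists>f. distributed M lborel \<epsilon> f"
    and p: "0 < p" "p < 1"
    and y0: "\<P>(\<omega> in M. g (X \<omega> + \<delta> \<omega>) + \<epsilon> \<omega> \<le> y0) = p"
    and mono: "mono g"
  shows "\<exists>x0. optimal M X (\<lambda>\<omega>. g (X \<omega> + \<delta> \<omega>) + \<epsilon> \<omega>) y0 p (\<lambda>x. x) x0"
proof -
  interpret prob_space M by fact
  have [measurable]: "X \<in> borel_measurable M" "\<delta> \<in> borel_measurable M" "\<epsilon> \<in> borel_measurable M"
    and [measurable]: "g \<in> borel_measurable borel"
    using rv borel_measurable_mono[OF mono] by auto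
  have g_shift: "g (a + d) \<le> g (b + d)" if "a \<le> b" for a b d
    using mono that by (simp add: monoD)
  obtain x0 where x0: "prob {\<omega>\<in>space M. x0 < X \<omega>} = 1 - p"
    using densX exists_upper_tail_prob p by blast
  have "indep_var borel X borel (\<lambda>\<omega>. g (x0 + \<delta> \<omega>) + \<epsilon> \<omega>)"
    using indep_var_first_function_of_rest[OF indep, of "\<lambda>a b. g (x0 + a) + b"] by simp
  then show ?thesis
  proof (intro exI threshold_predictor_optimal)
    show "calibrated M X (\<lambda>x. x) x0 p"
      using x0 by (simp add: calibrated_def)
  next
    fix \<omega> assume "X \<omega> \<le> x0" "y0 < g (X \<omega> + \<delta> \<omega>) + \<epsilon> \<omega>"
    then show "y0 < g (x0 + \<delta> \<omega>) + \<epsilon> \<omega>"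
      using g_shift[of "X \<omega>" x0 "\<delta> \<omega>"] by simp
  next
    fix \<omega> assume "x0 < X \<omega>" "y0 < g (x0 + \<delta> \<omega>) + \<epsilon> \<omega>"
    then show "y0 < g (X \<omega> + \<delta> \<omega>) + \<epsilon> \<omega>"
      using g_shift[of x0 "X \<omega>" "\<delta> \<omega>"] by simp
  qed auto
qed

end
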